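(* Let $A,B\in\mathcal M_n$ be accretive with $W(A),W(B)\subset S_\alpha$ for some $0\le\alpha<\pi/2$, let $\Phi:\mathcal M_n\to\mathcal M_r$ be a positive linear map with $\Phi(\mathcal I)$ positive definite (so that $\Phi(A),\Phi(B)$ are accretive), and let $f\in\mathfrak m$. Then $$\Re\,\Phi(A\sigma_fB)\le\sec^2(\alpha)\,\Re\big(\Phi(A)\,\sigma_f\,\Phi(B)\big).$$
   Context: A matrix $A$ is accretive if $\Re A=\frac{A+A^*}{2}$ is positive definite. $W(A)$ is the numerical range, $S_\alpha=\{z:\Re z>0,\ |\Im z|\le\tan(\alpha)\Re z\}$. $\le$ is the Löwner order. A linear map $\Phi$ is positive if it maps positive semidefinite matrices to positive semidefinite matrices. $\mathfrak m$ is the set of matrix monotone $f:(0,\infty)\to(0,\infty)$ with $f(1)=1$; each has a unique probability measure $\nu_f$ on $[0,1]$ with $f(x)=\int_0^1((1-t)+tx^{-1})^{-1}d\nu_f(t)$, $x>0$. For accretive $A,B$: $A!_tB=((1-t)A^{-1}+tB^{-1})^{-1}$ and $A\sigma_fB:=\int_0^1A!_tB\,d\nu_f(t)$. *)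

theory Defs
  imports "HOL-Analysis.Analysis" "HOL-Probability.Probability"
begin

type_synonym 'n cmat = "complex^'n^'n"

definition cadj :: "complex^'n^'m \<Rightarrow> complex^'m^'n" where
  "cadj A = (\<chi> i j. cnj (A $ j $ i))"

definition cscale :: "complex \<Rightarrow> complex^'n^'m \<Rightarrow> complex^'n^'m" where
  "cscale c A = (\<chi> i j. c * A $ i $ j)"

definition qform :: "'n::finite cmat \<Rightarrow> complex^'n \<Rightarrow> complex" where
  "qform A x = (\<Sum>i\<in>UNIV. cnj (x $ i) * (A *v x) $ i)"

definition cnorm2 :: "complex^'n \<Rightarrow> real" where
  "cnorm2 x = (\<Sum>i\<in>UNIV. (cmod (x $ i))^2)"

definition ReM :: "'n::finite cmat \<Rightarrow> 'n cmat" where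
  "ReM A = (1/2::real) *\<^sub>R (A + cadj A)"

definition hermitian :: "'n::finite cmat \<Rightarrow> bool" where
  "hermitian A \<longleftrightarrow> cadj A = A"

definition psd :: "'n::finite cmat \<Rightarrow> bool" where
  "psd A \<longleftrightarrow> hermitian A \<and> (\<forall>x. Re (qform A x) \<ge> 0)"

definition posdef :: "'n::finite cmat \<Rightarrow> bool" where
  "posdef A \<longleftrightarrow> hermitian A \<and> (\<forall>x. x \<noteq> 0 \<longrightarrow> Re (qform A x) > 0)"

definition loewner_le :: "'n::finite cmat \<Rightarrow> 'n cmat \<Rightarrow> bool" where
  "loewner_le A B \<longleftrightarrow> psd (B - A)"

definition accretive :: "'n::finite cmat \<Rightarrow> bool" where
  "accretive A \<longleftrightarrow> posdef (ReM A)"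

definition numrange :: "'n::finite cmat \<Rightarrow> complex set" where
  "numrange A = {qform A x | x. cnorm2 x = 1}"

definition sector :: "real \<Rightarrow> complex set" where
  "sector \<alpha> = {z. Re z > 0 \<and> \<bar>Im z\<bar> \<le> tan \<alpha> * Re z}"

definition positive_linear_map :: "('n::finite cmat \<Rightarrow> 'r::finite cmat) \<Rightarrow> bool" where
  "positive_linear_map \<Phi> \<longleftrightarrow>
     (\<forall>A B. \<Phi> (A + B) = \<Phi> A + \<Phi> B) \<and>
     (\<forall>c A. \<Phi> (cscale c A) = cscale c (\<Phi> A)) \<and>
     (\<forall>A. psd A \<longrightarrow> psd (\<Phi> A))"

definition hmean :: "'n::finite cmat \<Rightarrow> real \<Rightarrow> 'n cmat \<Rightarrow> 'n cmat" where
  "hmean A t B = matrix_inv ((1 - t) *\<^sub>R matrix_inv A + t *\<^sub>R matrix_inv B)"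

text \<open>A sigma_f B = integral over [0,1] of A !_t B d nu_f(t) (Bochner integral).\<close>
definition opmean :: "real measure \<Rightarrow> 'n::finite cmat \<Rightarrow> 'n cmat \<Rightarrow> 'n cmat" where
  "opmean \<nu> A B = (\<integral>t. hmean A t B \<partial>\<nu>)"

definition represents :: "real measure \<Rightarrow> (real \<Rightarrow> real) \<Rightarrow> bool" where
  "represents \<nu> f \<longleftrightarrow> prob_space \<nu> \<and> sets \<nu> = sets (restrict_space borel {0..1}) \<and>
     (\<forall>x>0. f x = (\<integral>t. inverse ((1 - t) + t * inverse x) \<partial>\<nu>))"

end

theory Submission
  imports Defs
begin

(* Both sides are integrals against nu of expressions that are linear in the integrand
   t |-> A !_t B, so it suffices to show Re Phi(A !_t B) <= sec^2(alpha) Re(Phi A !_t Phi B)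
   for every t in [0,1].  For 0 < t < 1 this is the chain
     cos^2(alpha) Re(A !_t B) <= Re A !_t Re B              (sector condition),
     Phi(Re A !_t Re B) <= Phi(Re A) !_t Phi(Re B)           (Ando's inequality),
     Re M !_t Re N <= Re(M !_t N)  for accretive M, N,
   using Phi(Re X) = Re(Phi X).  The first and last steps rest on the description
   <(M !_t N) x, x> = <M y, y>/(1-t) + <N z, z>/t for the splitting x = y + z with
   M y/(1-t) = N z/t, which minimises the right-hand side when M and N are positive definite.
   Ando's inequality reduces to a scalar inequality after diagonalising P and Q simultaneously. *)

section \<open>Inner product, adjoint and quadratic forms\<close>

definition cinner :: "complex^'n::finite \<Rightarrow> complex^'n \<Rightarrow> complex" where
  "cinner x y = (\<Sum>i\<in>UNIV. cnj (x $ i) * y $ i)"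

lemma cinner_add_left: "cinner (x + y) z = cinner x z + cinner y z"
  by (simp add: cinner_def distrib_right sum.distrib)

lemma cinner_add_right: "cinner x (y + z) = cinner x y + cinner x z"
  by (simp add: cinner_def distrib_left sum.distrib)

lemma cinner_diff_left: "cinner (x - y) z = cinner x z - cinner y z"
  by (simp add: cinner_def left_diff_distrib sum_subtractf)

lemma cinner_diff_right: "cinner x (y - z) = cinner x y - cinner x z"
  by (simp add: cinner_def right_diff_distrib sum_subtractf)

lemma cinner_minus_left: "cinner (- x) y = - cinner x y"
  by (simp add: cinner_def sum_negf)

lemma cinner_minus_right: "cinner x (- y) = - cinner x y"
  by (simp add: cinner_def sum_negf)

lemma cinner_scale_left: "cinner (c *s x) y = cnj c * cinner x y"
  by (simp add: cinner_def sum_distrib_left mult_ac)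

lemma cinner_scale_right: "cinner x (c *s y) = c * cinner x y"
  by (simp add: cinner_def sum_distrib_left mult_ac)

lemma cinner_scaleR_left: "cinner (r *\<^sub>R x) y = of_real r * cinner x y"
  unfolding cinner_def by (simp add: sum_distrib_left) (simp add: scaleR_conv_of_real mult_ac)

lemma cinner_scaleR_right: "cinner x (r *\<^sub>R y) = of_real r * cinner x y"
  unfolding cinner_def by (simp add: sum_distrib_left) (simp add: scaleR_conv_of_real mult_ac)

lemma cinner_zero_left [simp]: "cinner 0 x = 0"
  by (simp add: cinner_def)

lemma cinner_zero_right [simp]: "cinner x 0 = 0"
  by (simp add: cinner_def)

lemma cinner_sum_left: "cinner (sum f S) x = (\<Sum>s\<in>S. cinner (f s) x)"
  by (induction S rule: infinite_finite_induct) (auto simp: cinner_add_left)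

lemma cinner_sum_right: "cinner x (sum f S) = (\<Sum>s\<in>S. cinner x (f s))"
  by (induction S rule: infinite_finite_induct) (auto simp: cinner_add_right)

lemma cinner_commute: "cnj (cinner x y) = cinner y x"
  by (simp add: cinner_def mult_ac)

lemma Re_cinner: "Re (cinner x y) = inner x y"
  by (simp add: cinner_def inner_vec_def inner_complex_def Re_sum)

lemma norm_cvec_square: "(norm x)\<^sup>2 = (\<Sum>i\<in>UNIV. (cmod (x $ i))\<^sup>2)"
  for x :: "complex^'n::finite"
  by (simp add: norm_vec_def L2_set_def real_sqrt_pow2 sum_nonneg)

lemma cinner_self: "cinner x x = of_real ((norm x)\<^sup>2)"
proof -
  have "cinner x x = (\<Sum>i\<in>UNIV. of_real ((cmod (x $ i))\<^sup>2))"
    unfolding cinner_def by (intro sum.cong refl) (metis complex_norm_square mult.commute)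
  then show ?thesis
    by (simp add: norm_cvec_square)
qed

lemma cnorm2_eq_norm_square: "cnorm2 x = (norm x)\<^sup>2"
  by (simp add: cnorm2_def norm_cvec_square)

lemma scaleR_matrix_vector_assoc: "(r *\<^sub>R A) *v x = r *\<^sub>R (A *v x)"
  for A :: "'a::real_algebra_1^'n^'m"
  by (simp add: matrix_vector_mult_def vec_eq_iff scaleR_sum_right)

lemma matrix_vector_mult_scaleR_right: "A *v (r *\<^sub>R x) = r *\<^sub>R (A *v x)"
  for A :: "'a::real_algebra_1^'n^'m"
  by (simp add: matrix_vector_mult_def vec_eq_iff scaleR_sum_right)

lemma matrix_vector_mult_minus_right: "A *v (- x) = - (A *v x)"
  for A :: "'a::ring_1^'n^'m"
  by (simp add: matrix_vector_mult_def vec_eq_iff sum_negf)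

lemma sum_matrix_vector_distrib: "sum F S *v x = (\<Sum>s\<in>S. F s *v x)"
  for x :: "'a::ring_1^'n"
  by (induction S rule: infinite_finite_induct) (auto simp: matrix_vector_mult_add_rdistrib)

lemma matrix_vector_mult_sum_right: "A *v sum f S = (\<Sum>s\<in>S. A *v f s)"
  for A :: "'a::ring_1^'n^'m"
  by (induction S rule: infinite_finite_induct) (auto simp: matrix_vector_right_distrib)

lemma scaleR_cvec: "r *\<^sub>R x = complex_of_real r *s x"
  for x :: "complex^'n"
  by (simp add: vec_eq_iff scaleR_conv_of_real[where 'a=complex])

lemma cscale_of_real: "cscale (of_real r) A = r *\<^sub>R A"
  by (simp add: cscale_def vec_eq_iff scaleR_conv_of_real[where 'a=complex])

lemma cinner_cadj: "cinner x (A *v y) = cinner (cadj A *v x) y"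
  unfolding cinner_def matrix_vector_mult_def cadj_def
  by (simp add: sum_distrib_left sum_distrib_right cnj_sum) (subst sum.swap, simp add: mult_ac)

lemma cadj_cadj [simp]: "cadj (cadj A) = A"
  by (simp add: cadj_def vec_eq_iff)

lemma cadj_add: "cadj (A + B) = cadj A + cadj B"
  by (simp add: cadj_def vec_eq_iff)

lemma cadj_diff: "cadj (A - B) = cadj A - cadj B"
  by (simp add: cadj_def vec_eq_iff)

lemma cadj_scaleR: "cadj (r *\<^sub>R A) = r *\<^sub>R cadj A"
  by (simp add: cadj_def vec_eq_iff)

lemma cadj_cscale: "cadj (cscale c A) = cscale (cnj c) (cadj A)"
  by (simp add: cadj_def cscale_def vec_eq_iff)

lemma cadj_mat_1 [simp]: "cadj (mat 1) = mat 1"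
  by (simp add: cadj_def mat_def vec_eq_iff)

lemma cadj_matrix_mult: "cadj (A ** B) = cadj B ** cadj A"
  for A :: "complex^'n^'m"
  by (simp add: cadj_def matrix_matrix_mult_def vec_eq_iff cnj_sum mult_ac)

lemma qform_cinner: "qform A x = cinner x (A *v x)"
  by (simp add: qform_def cinner_def)

lemma qform_add: "qform (A + B) x = qform A x + qform B x"
  by (simp add: qform_cinner matrix_vector_mult_add_rdistrib cinner_add_right)

lemma qform_diff: "qform (A - B) x = qform A x - qform B x"
  by (simp add: qform_cinner matrix_vector_mult_diff_rdistrib cinner_diff_right)

lemma qform_scaleR: "qform (r *\<^sub>R A) x = of_real r * qform A x"
  by (simp add: qform_cinner scaleR_matrix_vector_assoc cinner_scaleR_right)

lemma qform_sum: "qform (sum F S) x = (\<Sum>s\<in>S. qform (F s) x)"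
  by (simp add: qform_cinner sum_matrix_vector_distrib cinner_sum_right)

lemma qform_cadj: "qform (cadj A) x = cnj (qform A x)"
  by (simp add: qform_cinner cinner_cadj cinner_commute)

lemma qform_mat_1: "qform (mat 1) x = of_real ((norm x)\<^sup>2)"
  by (simp add: qform_cinner cinner_self)

lemma qform_zero_vec [simp]: "qform A 0 = 0"
  by (simp add: qform_cinner)

lemma qform_scaleR_vec: "qform A (r *\<^sub>R x) = of_real (r\<^sup>2) * qform A x"
  by (simp add: qform_cinner matrix_vector_mult_scaleR_right cinner_scaleR_left cinner_scaleR_right
      power2_eq_square)

lemma qform_minus_vec: "qform A (- x) = qform A x"
  by (simp add: qform_cinner matrix_vector_mult_minus_right cinner_minus_left cinner_minus_right)

lemma continuous_on_Re_qform: "continuous_on S (\<lambda>x. Re (qform A x))"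
  unfolding qform_def matrix_vector_mult_def by (intro continuous_intros)

lemma qform_ReM: "qform (ReM A) x = of_real (Re (qform A x))"
proof -
  have "qform (ReM A) x = of_real (1/2) * (qform A x + cnj (qform A x))"
    by (simp add: ReM_def qform_scaleR qform_add qform_cadj)
  then show ?thesis
    by (simp add: complex_add_cnj)
qed

lemma Re_qform_ReM [simp]: "Re (qform (ReM A) x) = Re (qform A x)"
  by (simp add: qform_ReM)

lemma hermitian_ReM: "hermitian (ReM A)"
  by (simp add: hermitian_def ReM_def cadj_scaleR cadj_add add.commute)

lemma hermitian_add: "hermitian A \<Longrightarrow> hermitian B \<Longrightarrow> hermitian (A + B)"
  by (simp add: hermitian_def cadj_add)

lemma hermitian_diff: "hermitian A \<Longrightarrow> hermitian B \<Longrightarrow> hermitian (A - B)"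
  by (simp add: hermitian_def cadj_diff)

lemma hermitian_scaleR: "hermitian A \<Longrightarrow> hermitian (r *\<^sub>R A)"
  by (simp add: hermitian_def cadj_scaleR)

lemma hermitian_mat_1: "hermitian (mat 1)"
  by (simp add: hermitian_def)

lemma hermitian_cinner: "hermitian A \<Longrightarrow> cinner x (A *v y) = cinner (A *v x) y"
  by (simp add: hermitian_def cinner_cadj)

lemma hermitian_cinner_commute: "hermitian A \<Longrightarrow> cinner x (A *v y) = cnj (cinner y (A *v x))"
  by (simp add: hermitian_cinner cinner_commute)

lemma hermitian_qform_real:
  assumes "hermitian A"
  shows "qform A x = of_real (Re (qform A x))"
  using qform_cadj[of A x] assms by (simp add: hermitian_def complex_eq_iff)

lemma Re_qform_add_hermitian:
  assumes "hermitian A"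
  shows "Re (qform A (x + y)) = Re (qform A x) + 2 * Re (cinner y (A *v x)) + Re (qform A y)"
proof -
  have "qform A (x + y) = qform A x + cinner x (A *v y) + cinner y (A *v x) + qform A y"
    by (simp add: qform_cinner matrix_vector_right_distrib cinner_add_left cinner_add_right)
  then show ?thesis
    using hermitian_cinner_commute[OF assms, of x y] by simp
qed

lemma posdef_Re_qform_nonneg: "posdef A \<Longrightarrow> Re (qform A x) \<ge> 0"
  by (cases "x = 0") (auto simp: posdef_def less_imp_le)

lemma posdef_imp_psd: "posdef A \<Longrightarrow> psd A"
  by (simp add: psd_def posdef_Re_qform_nonneg posdef_def)

lemma Re_qform_ge_min_on_sphere:
  fixes A :: "'n::finite cmat"
  obtains x0 where "norm x0 = 1" "\<And>x. Re (qform A x0) * (norm x)\<^sup>2 \<le> Re (qform A x)"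
proof -
  let ?f = "\<lambda>x. Re (qform A x)"
  have "sphere (0::complex^'n) 1 \<noteq> {}"
    by simp
  then obtain x0 where x0: "x0 \<in> sphere 0 1" and min: "\<forall>y\<in>sphere 0 1. ?f x0 \<le> ?f y"
    using continuous_attains_inf[OF compact_sphere _ continuous_on_Re_qform] by blast
  have "?f x0 * (norm x)\<^sup>2 \<le> ?f x" for x
  proof (cases "x = 0")
    case False
    then have "?f x0 \<le> ?f (inverse (norm x) *\<^sub>R x)"
      using min by simp
    also have "\<dots> = ?f x / (norm x)\<^sup>2"
      by (simp add: qform_scaleR_vec field_simps)
    finally show ?thesis
      using False by (simp add: field_simps)
  qed simp
  then show ?thesis
    using that x0 by simp
qed

lemma Re_qform_lower_bound: "\<exists>m. \<forall>x. m * (norm x)\<^sup>2 \<le> Re (qform A x)"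
  by (metis Re_qform_ge_min_on_sphere)

lemma posdef_lower_bound:
  assumes "posdef A"
  shows "\<exists>m>0. \<forall>x. m * (norm x)\<^sup>2 \<le> Re (qform A x)"
proof -
  obtain x0 where "norm x0 = 1" "\<And>x. Re (qform A x0) * (norm x)\<^sup>2 \<le> Re (qform A x)"
    using Re_qform_ge_min_on_sphere by blast
  moreover have "Re (qform A x0) > 0"
    using assms \<open>norm x0 = 1\<close> unfolding posdef_def by (metis norm_zero zero_neq_one)
  ultimately show ?thesis
    by blast
qed

lemma accretive_lower_bound:
  "accretive A \<Longrightarrow> \<exists>m>0. \<forall>x. m * (norm x)\<^sup>2 \<le> Re (qform A x)"
  using posdef_lower_bound[of "ReM A"] by (simp add: accretive_def)

lemma psd_diff_scaleR_mat_1: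
  assumes "hermitian A" "\<forall>x. m * (norm x)\<^sup>2 \<le> Re (qform A x)"
  shows "psd (A - m *\<^sub>R mat 1)"
  using assms
  by (simp add: psd_def hermitian_diff hermitian_scaleR hermitian_mat_1 qform_diff qform_scaleR
      qform_mat_1)

section \<open>Accretive matrices and weighted harmonic means\<close>

lemma matrix_inv_left: "invertible A \<Longrightarrow> matrix_inv A ** A = mat 1"
  and matrix_inv_right: "invertible A \<Longrightarrow> A ** matrix_inv A = mat 1"
  for A :: "'a::field^'n^'n"
  unfolding invertible_def matrix_inv_def by (metis (mono_tags, lifting) someI_ex)+

lemma matrix_inv_unique:
  fixes A B :: "'a::field^'n^'n"
  assumes "B ** A = mat 1"
  shows "matrix_inv A = B"
proof -
  have "invertible A"
    using assms invertible_left_inverse by blast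
  then have "matrix_inv A = matrix_inv A ** (A ** B)"
    using assms matrix_left_right_inverse by (metis matrix_mul_rid)
  also have "\<dots> = B"
    by (simp add: matrix_mul_assoc matrix_inv_left \<open>invertible A\<close>)
  finally show ?thesis .
qed

lemma invertible_if_ker_trivial: "(\<And>x. A *v x = 0 \<Longrightarrow> x = 0) \<Longrightarrow> invertible A"
  for A :: "'a::field^'n^'n"
  using matrix_left_invertible_ker invertible_left_inverse by blast

lemma matrix_inv_inv: "invertible A \<Longrightarrow> matrix_inv (matrix_inv A) = A"
  for A :: "'a::field^'n^'n"
  using matrix_inv_right matrix_inv_unique by blast

lemma matrix_inv_mult_vector_cancel: "invertible A \<Longrightarrow> matrix_inv A *v (A *v x) = x"
  and matrix_mult_inv_vector_cancel: "invertible A \<Longrightarrow> A *v (matrix_inv A *v x) = x"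
  for A :: "'a::field^'n^'n"
  by (simp_all add: matrix_vector_mul_assoc matrix_inv_left matrix_inv_right)

lemma hermitian_matrix_inv:
  assumes "hermitian A" "invertible A"
  shows "hermitian (matrix_inv A)"
proof -
  have "matrix_inv (cadj A) = cadj (matrix_inv A)"
    by (rule matrix_inv_unique) (simp add: cadj_matrix_mult[symmetric] matrix_inv_right assms(2))
  then show ?thesis
    using assms(1) by (simp add: hermitian_def)
qed

lemma accretive_iff: "accretive A \<longleftrightarrow> (\<forall>x. x \<noteq> 0 \<longrightarrow> Re (qform A x) > 0)"
  by (simp add: accretive_def posdef_def hermitian_ReM)

lemma posdef_imp_accretive: "posdef A \<Longrightarrow> accretive A"
  by (simp add: posdef_def accretive_iff)

lemma accretive_invertible:
  assumes "accretive A"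
  shows "invertible A"
proof (rule invertible_if_ker_trivial)
  fix x
  assume "A *v x = 0"
  then have "Re (qform A x) = 0"
    by (simp add: qform_cinner)
  then show "x = 0"
    using assms by (force simp: accretive_iff)
qed

lemma Re_qform_matrix_inv:
  assumes "invertible A"
  shows "Re (qform (matrix_inv A) x) = Re (qform A (matrix_inv A *v x))"
proof -
  have "qform A (matrix_inv A *v x) = cinner (matrix_inv A *v x) x"
    by (simp add: qform_cinner matrix_mult_inv_vector_cancel[OF assms])
  also have "\<dots> = cnj (qform (matrix_inv A) x)"
    by (simp add: qform_cinner cinner_commute)
  finally show ?thesis
    by simp
qed

lemma accretive_matrix_inv:
  fixes A :: "'n::finite cmat"
  assumes "accretive A"
  shows "accretive (matrix_inv A)"
  unfolding accretive_iff
proof (intro allI impI)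
  fix x :: "complex^'n"
  assume "x \<noteq> 0"
  have inv: "invertible A"
    using accretive_invertible[OF assms] .
  then have "matrix_inv A *v x \<noteq> 0"
    using \<open>x \<noteq> 0\<close> matrix_mult_inv_vector_cancel[OF inv, of x] by auto
  then show "Re (qform (matrix_inv A) x) > 0"
    using assms by (simp add: Re_qform_matrix_inv[OF inv] accretive_iff)
qed

lemma accretive_convex_comb:
  fixes A B :: "'n::finite cmat"
  assumes "accretive A" "accretive B" "0 \<le> t" "t \<le> 1"
  shows "accretive ((1 - t) *\<^sub>R A + t *\<^sub>R B)"
  unfolding accretive_iff
proof (intro allI impI)
  fix x :: "complex^'n"
  assume "x \<noteq> 0"
  then have "Re (qform A x) > 0" "Re (qform B x) > 0"
    using assms by (auto simp: accretive_iff)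
  then have "(1 - t) * Re (qform A x) + t * Re (qform B x) > 0"
    using assms(3,4) by (cases "t = 0") (auto intro: add_nonneg_pos)
  then show "Re (qform ((1 - t) *\<^sub>R A + t *\<^sub>R B) x) > 0"
    by (simp add: qform_add qform_scaleR)
qed

lemma accretive_hmean_denominator:
  assumes "accretive A" "accretive B" "0 \<le> t" "t \<le> 1"
  shows "accretive ((1 - t) *\<^sub>R matrix_inv A + t *\<^sub>R matrix_inv B)"
  using accretive_convex_comb[OF accretive_matrix_inv accretive_matrix_inv] assms by blast

lemma hmean_0: "accretive A \<Longrightarrow> hmean A 0 B = A"
  and hmean_1: "accretive B \<Longrightarrow> hmean A 1 B = B"
  by (simp_all add: hmean_def matrix_inv_inv accretive_invertible)

lemma hermitian_hmean:
  assumes "posdef A" "posdef B" "0 \<le> t" "t \<le> 1"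
  shows "hermitian (hmean A t B)"
proof -
  have "hermitian (matrix_inv A)" "hermitian (matrix_inv B)"
    using assms(1,2) hermitian_matrix_inv accretive_invertible posdef_imp_accretive
    by (auto simp: posdef_def)
  then have "hermitian ((1 - t) *\<^sub>R matrix_inv A + t *\<^sub>R matrix_inv B)"
    by (simp add: hermitian_add hermitian_scaleR)
  then show ?thesis
    unfolding hmean_def using accretive_hmean_denominator posdef_imp_accretive assms
    by (blast intro: hermitian_matrix_inv accretive_invertible)
qed

lemma hmean_split:
  assumes "accretive M" "accretive N" "0 \<le> t" "t \<le> 1"
  obtains y z u where "x = y + z" "M *v y = (1 - t) *\<^sub>R u" "N *v z = t *\<^sub>R u"
    "u = hmean M t N *v x"
proof -
  define X where "X = (1 - t) *\<^sub>R matrix_inv M + t *\<^sub>R matrix_inv N"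
  have "invertible X" "invertible M" "invertible N"
    using accretive_invertible accretive_hmean_denominator assms by (auto simp: X_def)
  define u where "u = hmean M t N *v x"
  define y where "y = (1 - t) *\<^sub>R (matrix_inv M *v u)"
  define z where "z = t *\<^sub>R (matrix_inv N *v u)"
  have "y + z = X *v u"
    by (simp add: y_def z_def X_def matrix_vector_mult_add_rdistrib scaleR_matrix_vector_assoc)
  also have "\<dots> = x"
    by (simp add: u_def hmean_def X_def[symmetric] matrix_mult_inv_vector_cancel \<open>invertible X\<close>)
  finally show ?thesis
    using that[of y z u] \<open>invertible M\<close> \<open>invertible N\<close>
    by (simp add: u_def y_def z_def matrix_vector_mult_scaleR_right matrix_mult_inv_vector_cancel)
qed

lemma Re_qform_split:
  assumes "x = y + z" "M *v y = (1 - t) *\<^sub>R u" "N *v z = t *\<^sub>R u" "u = W *v x" "0 < t" "t < 1"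
  shows "Re (qform W x) = Re (qform M y) / (1 - t) + Re (qform N z) / t"
  using assms by (simp add: qform_cinner cinner_scaleR_right cinner_add_left)

text \<open>For positive definite matrices the splitting of \<open>hmean_split\<close> minimises the right-hand
  side, so every splitting bounds the harmonic mean from above.\<close>

lemma Re_qform_hmean_le:
  assumes P: "posdef P" and Q: "posdef Q" and t: "0 < t" "t < 1"
  shows "Re (qform (hmean P t Q) (y + z)) \<le> Re (qform P y) / (1 - t) + Re (qform Q z) / t"
proof -
  obtain y0 z0 u where split: "y + z = y0 + z0" "P *v y0 = (1 - t) *\<^sub>R u" "Q *v z0 = t *\<^sub>R u"
      "u = hmean P t Q *v (y + z)"
    using hmean_split[OF posdef_imp_accretive[OF P] posdef_imp_accretive[OF Q], of t "y + z"] t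
    by (metis less_eq_real_def)
  define d where "d = y - y0"
  have "y = y0 + d" "z = z0 + (- d)"
    using split(1) by (auto simp: d_def algebra_simps)
  then have "Re (qform P y) / (1 - t) = Re (qform P y0) / (1 - t) + 2 * Re (cinner d u) + Re (qform P d) / (1 - t)"
    and "Re (qform Q z) / t = Re (qform Q z0) / t - 2 * Re (cinner d u) + Re (qform Q d) / t"
    using Re_qform_add_hermitian[of P y0 d] Re_qform_add_hermitian[of Q z0 "- d"] P Q split(2,3) t
    by (simp_all add: posdef_def cinner_scaleR_right cinner_minus_left qform_minus_vec
        add_divide_distrib diff_divide_distrib)
  moreover have "Re (qform P d) / (1 - t) \<ge> 0" "Re (qform Q d) / t \<ge> 0"
    using posdef_Re_qform_nonneg[OF P, of d] posdef_Re_qform_nonneg[OF Q, of d] t by simp_all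
  moreover have "Re (qform (hmean P t Q) (y + z)) = Re (qform P y0) / (1 - t) + Re (qform Q z0) / t"
    using Re_qform_split[OF split t] .
  ultimately show ?thesis
    by linarith
qed

lemma Re_qform_hmean_ReM_le:
  assumes "accretive M" "accretive N" "0 < t" "t < 1"
  shows "Re (qform (hmean (ReM M) t (ReM N)) x) \<le> Re (qform (hmean M t N) x)"
proof -
  obtain y z u where split: "x = y + z" "M *v y = (1 - t) *\<^sub>R u" "N *v z = t *\<^sub>R u"
      "u = hmean M t N *v x"
    using hmean_split assms by (metis less_eq_real_def)
  have "Re (qform (hmean (ReM M) t (ReM N)) (y + z))
      \<le> Re (qform (ReM M) y) / (1 - t) + Re (qform (ReM N) z) / t"
    using Re_qform_hmean_le[of "ReM M" "ReM N" t y z] assms by (simp add: accretive_def)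
  also have "\<dots> = Re (qform (hmean M t N) x)"
    using Re_qform_split[OF split assms(3,4)] by simp
  finally show ?thesis
    using split(1) by simp
qed

section \<open>Sectorial matrices\<close>

lemma qform_in_sector:
  assumes "numrange A \<subseteq> sector \<alpha>"
  shows "Re (qform A v) \<ge> 0" "\<bar>Im (qform A v)\<bar> \<le> tan \<alpha> * Re (qform A v)"
proof -
  have "Re (qform A v) \<ge> 0 \<and> \<bar>Im (qform A v)\<bar> \<le> tan \<alpha> * Re (qform A v)"
  proof (cases "v = 0")
    case False
    define r where "r = (inverse (norm v))\<^sup>2"
    have "r > 0"
      using False by (simp add: r_def)
    have "cnorm2 (inverse (norm v) *\<^sub>R v) = 1"
      using False by (simp add: cnorm2_eq_norm_square)
    then have "of_real r * qform A v \<in> sector \<alpha>"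
      using assms by (force simp: numrange_def qform_scaleR_vec r_def)
    then have "r * Re (qform A v) > 0" "r * \<bar>Im (qform A v)\<bar> \<le> r * (tan \<alpha> * Re (qform A v))"
      using \<open>r > 0\<close> by (auto simp: sector_def abs_mult mult_ac)
    then show ?thesis
      using \<open>r > 0\<close> by (simp add: zero_less_mult_iff)
  qed simp
  then show "Re (qform A v) \<ge> 0" "\<bar>Im (qform A v)\<bar> \<le> tan \<alpha> * Re (qform A v)"
    by auto
qed

lemma qform_add_scale: "qform A (x + c *s y) =
    qform A x + c * cinner x (A *v y) + cnj c * cinner y (A *v x) + cnj c * c * qform A y"
  by (simp add: qform_cinner matrix_vector_right_distrib vector_scalar_commute cinner_add_left
      cinner_add_right cinner_scale_left cinner_scale_right algebra_simps)

text \<open>Apply the sector condition to \<open>d + i s w\<close> and \<open>d - i s w\<close> with \<open>s = tan \<alpha>\<close>.\<close>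

lemma sector_cross_term_le:
  assumes S: "numrange A \<subseteq> sector \<alpha>" and "0 \<le> \<alpha>" "\<alpha> < pi/2"
  shows "Re (cinner d (A *v w)) - Re (cinner w (A *v d)) \<le> Re (qform A d) + (tan \<alpha>)\<^sup>2 * Re (qform A w)"
    (is "?E \<le> _")
proof -
  define \<tau> where "\<tau> = tan \<alpha>"
  have "\<tau> \<ge> 0"
    using tan_pos_pi2_le assms by (simp add: \<tau>_def)
  define v where "v s = d + (\<i> * of_real s) *s w" for s
  have Im_v: "Im (qform A (v s)) = Im (qform A d) + s * ?E + s\<^sup>2 * Im (qform A w)" for s
    by (simp add: v_def qform_add_scale algebra_simps power2_eq_square)
  have Re_v: "Re (qform A (v s)) = Re (qform A d)
      - s * (Im (cinner d (A *v w)) - Im (cinner w (A *v d))) + s\<^sup>2 * Re (qform A w)" for s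
    by (simp add: v_def qform_add_scale algebra_simps power2_eq_square)
  have "Im (qform A (v s)) - Im (qform A (v (- s))) = 2 * s * ?E" for s
    by (simp add: Im_v)
  moreover have "Re (qform A (v s)) + Re (qform A (v (- s))) = 2 * Re (qform A d) + 2 * s\<^sup>2 * Re (qform A w)" for s
    by (simp add: Re_v)
  moreover have "Im (qform A (v s)) - Im (qform A (v (- s))) \<le> \<tau> * (Re (qform A (v s)) + Re (qform A (v (- s))))" for s
    using qform_in_sector(2)[OF S, of "v s"] qform_in_sector(2)[OF S, of "v (- s)"]
    by (simp add: \<tau>_def distrib_left abs_le_iff)
  ultimately have bound: "2 * s * ?E \<le> \<tau> * (2 * Re (qform A d) + 2 * s\<^sup>2 * Re (qform A w))" for s
    by metis
  show ?thesis
  proof (cases "\<tau> = 0")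
    case True
    then show ?thesis
      using bound[of 1] qform_in_sector(1)[OF S, of d] by (simp add: \<tau>_def)
  next
    case False
    then have "\<tau> * (2 * ?E) \<le> \<tau> * (2 * (Re (qform A d) + \<tau>\<^sup>2 * Re (qform A w)))"
      using bound[of \<tau>] by (simp add: algebra_simps power2_eq_square)
    then show ?thesis
      using False \<open>\<tau> \<ge> 0\<close> by (simp add: \<tau>_def mult_le_cancel_left)
  qed
qed

lemma cos_square_sec_square: "cos \<alpha> \<noteq> 0 \<Longrightarrow> (cos \<alpha>)\<^sup>2 * (1 + (tan \<alpha>)\<^sup>2) = 1"
  using sin_cos_squared_add2[of \<alpha>]
  by (simp add: tan_def field_simps power2_eq_square)

lemma sector_cross_bound:
  assumes S: "numrange A \<subseteq> sector \<alpha>" and \<alpha>: "0 \<le> \<alpha>" "\<alpha> < pi/2"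
  shows "(cos \<alpha>)\<^sup>2 * (2 * Re (cinner p (A *v w)) - Re (qform A p)) \<le> Re (qform A w)"
proof -
  have "cos \<alpha> \<noteq> 0"
    using cos_gt_zero_pi[of \<alpha>] \<alpha> by simp
  define d where "d = p - w"
  have "2 * Re (cinner p (A *v w)) - Re (qform A p)
      = Re (qform A w) + (Re (cinner d (A *v w)) - Re (cinner w (A *v d))) - Re (qform A d)"
    by (simp add: d_def qform_cinner matrix_vector_mult_diff_distrib cinner_diff_left cinner_diff_right)
  also have "\<dots> \<le> (1 + (tan \<alpha>)\<^sup>2) * Re (qform A w)"
    using sector_cross_term_le[OF assms, of d w] by (simp add: algebra_simps)
  finally have "(cos \<alpha>)\<^sup>2 * (2 * Re (cinner p (A *v w)) - Re (qform A p))
      \<le> (cos \<alpha>)\<^sup>2 * (1 + (tan \<alpha>)\<^sup>2) * Re (qform A w)"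
    by (simp add: mult_left_mono mult.assoc)
  also have "\<dots> = Re (qform A w)"
    using cos_square_sec_square[OF \<open>cos \<alpha> \<noteq> 0\<close>] by simp
  finally show ?thesis .
qed

lemma sector_inverse_bound:
  assumes S: "numrange A \<subseteq> sector \<alpha>" and \<alpha>: "0 \<le> \<alpha>" "\<alpha> < pi/2"
    and "accretive A" and "a > 0"
  shows "2 * (cos \<alpha>)\<^sup>2 * Re (cinner y v) - Re (qform A y) / a
    \<le> (cos \<alpha>)\<^sup>2 * a * Re (qform (matrix_inv A) v)"
proof -
  define c where "c = (cos \<alpha>)\<^sup>2"
  have "c > 0"
    using cos_gt_zero_pi[of \<alpha>] \<alpha> by (simp add: c_def)
  have inv: "invertible A"
    using accretive_invertible \<open>accretive A\<close> by blast
  have "c * (2 * Re (cinner ((1/a) *\<^sub>R y) (A *v (matrix_inv A *v (c *\<^sub>R v)))) - Re (qform A ((1/a) *\<^sub>R y)))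
      \<le> Re (qform A (matrix_inv A *v (c *\<^sub>R v)))"
    using sector_cross_bound[OF S \<alpha>] unfolding c_def by blast
  then have "c * (2 * ((1/a) * c * Re (cinner y v)) - (1/a)\<^sup>2 * Re (qform A y))
      \<le> c\<^sup>2 * Re (qform (matrix_inv A) v)"
    by (simp add: matrix_mult_inv_vector_cancel[OF inv] Re_qform_matrix_inv[OF inv, symmetric]
        cinner_scaleR_left cinner_scaleR_right qform_scaleR_vec matrix_vector_mult_scaleR_right
        power2_eq_square mult_ac)
  then have "(c / a) * (2 * c * Re (cinner y v) - Re (qform A y) / a)
      \<le> (c / a) * (c * a * Re (qform (matrix_inv A) v))"
    using \<open>a > 0\<close> by (simp add: field_simps power2_eq_square)
  then have "2 * c * Re (cinner y v) - Re (qform A y) / a \<le> c * a * Re (qform (matrix_inv A) v)"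
    using \<open>c > 0\<close> \<open>a > 0\<close> mult_le_cancel_left_pos[of "c / a"] by (meson divide_pos_pos)
  then show ?thesis
    by (simp add: c_def)
qed

lemma cos_square_hmean_le_hmean_ReM:
  assumes acc: "accretive A" "accretive B"
    and S: "numrange A \<subseteq> sector \<alpha>" "numrange B \<subseteq> sector \<alpha>"
    and \<alpha>: "0 \<le> \<alpha>" "\<alpha> < pi/2" and t: "0 < t" "t < 1"
  shows "(cos \<alpha>)\<^sup>2 * Re (qform (hmean A t B) x) \<le> Re (qform (hmean (ReM A) t (ReM B)) x)"
proof -
  define c where "c = (cos \<alpha>)\<^sup>2"
  define N where "N = (1 - t) *\<^sub>R matrix_inv A + t *\<^sub>R matrix_inv B"
  have "invertible N"
    using accretive_invertible[OF accretive_hmean_denominator[OF acc]] t by (simp add: N_def)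
  define v where "v = hmean A t B *v x"
  have x: "x = N *v v"
    by (simp add: v_def hmean_def N_def[symmetric] matrix_mult_inv_vector_cancel \<open>invertible N\<close>)
  obtain y z u where split: "x = y + z" "ReM A *v y = (1 - t) *\<^sub>R u" "ReM B *v z = t *\<^sub>R u"
      "u = hmean (ReM A) t (ReM B) *v x"
    using hmean_split[of "ReM A" "ReM B" t x] acc t posdef_imp_accretive
    unfolding accretive_def[of A] accretive_def[of B] by (metis less_eq_real_def)
  have N_v: "cinner (N *v v) v = cnj (qform N v)"
    by (simp add: qform_cinner cinner_commute)
  have "Re (cinner y v) + Re (cinner z v) = Re (cinner x v)"
    by (simp add: split(1) cinner_add_left)
  also have "\<dots> = Re (qform N v)"
    using N_v x by simp
  finally have "c * Re (cinner y v) + c * Re (cinner z v) = c * Re (qform N v)"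
    by (metis distrib_left)
  moreover have "c * Re (qform N v)
      = c * ((1 - t) * Re (qform (matrix_inv A) v)) + c * (t * Re (qform (matrix_inv B) v))"
    by (simp add: N_def qform_add qform_scaleR distrib_left)
  moreover have "c * Re (qform (hmean A t B) x) = c * Re (qform N v)"
    using N_v by (simp add: qform_cinner flip: v_def x)
  moreover have "Re (qform (hmean (ReM A) t (ReM B)) x) = Re (qform A y) / (1 - t) + Re (qform B z) / t"
    using Re_qform_split[OF split t] by simp
  moreover have "2 * (c * Re (cinner y v)) - Re (qform A y) / (1 - t)
      \<le> c * ((1 - t) * Re (qform (matrix_inv A) v))"
    using sector_inverse_bound[OF S(1) \<alpha> acc(1), of "1 - t" y v] t by (simp add: c_def mult.assoc)
  moreover have "2 * (c * Re (cinner z v)) - Re (qform B z) / t \<le> c * (t * Re (qform (matrix_inv B) v))"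
    using sector_inverse_bound[OF S(2) \<alpha> acc(2), of t z v] t by (simp add: c_def mult.assoc)
  ultimately show ?thesis
    unfolding c_def by linarith
qed

section \<open>Simultaneous diagonalisation\<close>

definition orthonormal_wrt :: "'n::finite cmat \<Rightarrow> (complex^'n) set \<Rightarrow> bool" where
  "orthonormal_wrt P B \<longleftrightarrow> (\<forall>v\<in>B. \<forall>w\<in>B. cinner v (P *v w) = (if v = w then 1 else 0))"

definition gen_eigensystem ::
    "'n::finite cmat \<Rightarrow> 'n cmat \<Rightarrow> (complex^'n) set \<Rightarrow> (complex^'n \<Rightarrow> real) \<Rightarrow> bool" where
  "gen_eigensystem P Q B l \<longleftrightarrow>
     orthonormal_wrt P B \<and> (\<forall>v\<in>B. Q *v v = of_real (l v) *s (P *v v))"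

lemma orthonormal_wrt_coeff:
  assumes "orthonormal_wrt P B" "finite T" "T \<subseteq> B" "w \<in> T"
  shows "cinner w (P *v (\<Sum>v\<in>T. u v *s v)) = u w"
proof -
  have "cinner w (P *v (\<Sum>v\<in>T. u v *s v)) = (\<Sum>v\<in>T. u v * cinner w (P *v v))"
    by (simp add: matrix_vector_mult_sum_right vector_scalar_commute cinner_sum_right cinner_scale_right)
  also have "\<dots> = (\<Sum>v\<in>T. if v = w then u v else 0)"
  proof (intro sum.cong refl)
    fix v
    assume "v \<in> T"
    then have "cinner w (P *v v) = (if w = v then 1 else 0)"
      using assms(1,3,4) unfolding orthonormal_wrt_def by blast
    then show "u v * cinner w (P *v v) = (if v = w then u v else 0)"
      by simp
  qed
  also have "\<dots> = u w"
    using assms(2,4) by simp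
  finally show ?thesis .
qed

lemma orthonormal_wrt_card:
  fixes P :: "'n::finite cmat"
  assumes "orthonormal_wrt P B"
  shows "finite B" "card B \<le> CARD('n)"
proof -
  have "vec.independent B"
  proof
    assume "vec.dependent B"
    then obtain T u w where "finite T" "T \<subseteq> B" "(\<Sum>v\<in>T. u v *s v) = 0" "w \<in> T" "u w \<noteq> 0"
      unfolding vec.dependent_explicit by blast
    then show False
      using orthonormal_wrt_coeff[OF assms, of T w u] by simp
  qed
  then show "finite B"
    using vec.finiteI_independent by blast
  have "card B \<le> vec.dim (UNIV :: (complex^'n) set)"
    using vec.independent_card_le_dim[OF _ \<open>vec.independent B\<close>] by blast
  also have "vec.dim (UNIV :: (complex^'n) set) = CARD('n)"
    by (rule vec_dim_card)
  finally show "card B \<le> CARD('n)" .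
qed

lemma quadratic_nonpos_imp_linear_zero:
  fixes a b :: real
  assumes "\<And>s. 2 * s * a + s\<^sup>2 * b \<le> 0"
  shows "a = 0"
proof (rule ccontr)
  assume "a \<noteq> 0"
  define e where "e = 1 / (1 + \<bar>b\<bar>)"
  have "e > 0" "e * \<bar>b\<bar> < 1"
    by (auto simp: e_def field_simps)
  then have "2 + e * b > 0"
    by (smt (verit) abs_ge_self mult_left_mono mult_minus_right)
  moreover have "e * a\<^sup>2 > 0"
    using \<open>e > 0\<close> \<open>a \<noteq> 0\<close> by simp
  moreover have "e * a\<^sup>2 * (2 + e * b) \<le> 0"
    using assms[of "e * a"] by (simp add: algebra_simps power2_eq_square)
  ultimately show False
    using mult_pos_pos[of "e * a\<^sup>2" "2 + e * b"] by linarith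
qed

lemma hermitian_max_on_subspace_stationary:
  assumes "hermitian D" "vec.subspace V" "v0 \<in> V" "Re (qform D v0) = 0"
    and "\<And>x. x \<in> V \<Longrightarrow> Re (qform D x) \<le> 0" and "u \<in> V"
  shows "cinner u (D *v v0) = 0"
proof -
  have Re_zero: "Re (cinner w (D *v v0)) = 0" if "w \<in> V" for w
  proof (rule quadratic_nonpos_imp_linear_zero)
    fix s :: real
    have "v0 + s *\<^sub>R w \<in> V"
      using assms(2,3) that by (simp add: scaleR_cvec vec.subspace_add vec.subspace_scale)
    then have "Re (qform D (v0 + s *\<^sub>R w)) \<le> 0"
      using assms(5) by blast
    then show "2 * s * Re (cinner w (D *v v0)) + s\<^sup>2 * Re (qform D w) \<le> 0"
      using Re_qform_add_hermitian[OF assms(1), of v0 "s *\<^sub>R w"] assms(4)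
      by (simp add: cinner_scaleR_left qform_scaleR_vec)
  qed
  have "Im (cinner u (D *v v0)) = Re (cinner (\<i> *s u) (D *v v0))"
    by (simp add: cinner_scale_left)
  then show ?thesis
    using Re_zero[of u] Re_zero[of "\<i> *s u"] assms(2,6)
    by (simp add: complex_eq_iff vec.subspace_scale)
qed

lemma orthonormal_wrt_residual:
  assumes "orthonormal_wrt P B" "w \<in> B"
  shows "cinner w (P *v (x - (\<Sum>v\<in>B. cinner v (P *v x) *s v))) = 0"
  using orthonormal_wrt_coeff[OF assms(1) orthonormal_wrt_card(1)[OF assms(1)] subset_refl assms(2)]
  by (simp add: matrix_vector_mult_diff_distrib cinner_diff_right)

lemma orthonormal_wrt_eq_zero:
  assumes "orthonormal_wrt P B" and "\<And>v. v \<in> B \<Longrightarrow> cinner v y = 0"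
    and "\<And>u. (\<forall>v\<in>B. cinner v (P *v u) = 0) \<Longrightarrow> cinner u y = 0"
  shows "y = 0"
proof -
  define p where "p = (\<Sum>v\<in>B. cinner v (P *v y) *s v)"
  have "cinner (y - p) y = 0"
    using assms(3) orthonormal_wrt_residual[OF assms(1)] by (simp add: p_def)
  moreover have "cinner p y = 0"
    using assms(2) by (simp add: p_def cinner_sum_left cinner_scale_left)
  ultimately have "cinner y y = 0"
    by (simp add: cinner_diff_left)
  then show ?thesis
    by (simp add: cinner_self)
qed

lemma orthonormal_wrt_insert:
  assumes "orthonormal_wrt P B" "hermitian P"
    and "\<forall>v\<in>B. cinner v (P *v v0) = 0" "cinner v0 (P *v v0) = 1"
  shows "v0 \<notin> B" "orthonormal_wrt P (insert v0 B)"
proof -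
  show "v0 \<notin> B"
    using assms(3,4) by force
  have "cinner v0 (P *v w) = 0" if "w \<in> B" for w
    using assms(3) that hermitian_cinner_commute[OF assms(2), of v0 w] by simp
  then show "orthonormal_wrt P (insert v0 B)"
    using assms(1,3,4) \<open>v0 \<notin> B\<close> unfolding orthonormal_wrt_def by auto
qed

lemma Rayleigh_max_on_subspace:
  fixes P Q :: "'n::finite cmat"
  assumes P: "posdef P" and V: "vec.subspace V" "closed V" and "r \<in> V" "r \<noteq> 0"
  obtains v0 where "v0 \<in> V" "Re (qform P v0) = 1"
    "\<And>x. x \<in> V \<Longrightarrow> Re (qform Q x) \<le> Re (qform Q v0) * Re (qform P x)"
proof -
  obtain m where "m > 0" and m: "\<And>x. m * (norm x)\<^sup>2 \<le> Re (qform P x)"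
    using posdef_lower_bound[OF P] by blast
  define K where "K = V \<inter> {x. Re (qform P x) = 1}"
  define normalize where "normalize x = (1 / sqrt (Re (qform P x))) *\<^sub>R x" for x
  have normalize: "normalize x \<in> K" "Re (qform Q (normalize x)) = Re (qform Q x) / Re (qform P x)"
    if "x \<in> V" "x \<noteq> 0" for x
  proof -
    have "Re (qform P x) > 0"
      using P that(2) by (simp add: posdef_def)
    then have "Re (qform P (normalize x)) = 1"
      and "Re (qform Q (normalize x)) = Re (qform Q x) / Re (qform P x)"
      by (simp_all add: normalize_def qform_scaleR_vec power_divide)
    moreover have "normalize x \<in> V"
      using V(1) that(1) by (simp add: normalize_def scaleR_cvec vec.subspace_scale)
    ultimately show "normalize x \<in> K" "Re (qform Q (normalize x)) = Re (qform Q x) / Re (qform P x)"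
      by (simp_all add: K_def)
  qed
  have "K \<subseteq> cball 0 (sqrt (1 / m))"
  proof
    fix x
    assume "x \<in> K"
    then have "(norm x)\<^sup>2 \<le> 1 / m"
      using m[of x] \<open>m > 0\<close> by (simp add: K_def field_simps mult.commute)
    then show "x \<in> cball 0 (sqrt (1 / m))"
      by (simp add: real_le_rsqrt)
  qed
  moreover have "closed K"
    unfolding K_def by (intro closed_Int V(2) closed_Collect_eq continuous_on_Re_qform continuous_intros)
  ultimately have "compact K"
    by (meson bounded_cball bounded_subset compact_eq_bounded_closed)
  moreover have "K \<noteq> {}"
    using normalize(1)[OF \<open>r \<in> V\<close> \<open>r \<noteq> 0\<close>] by blast
  ultimately obtain v0 where "v0 \<in> K" and max: "\<And>y. y \<in> K \<Longrightarrow> Re (qform Q y) \<le> Re (qform Q v0)"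
    using continuous_attains_sup[OF _ _ continuous_on_Re_qform] by metis
  have "Re (qform Q x) \<le> Re (qform Q v0) * Re (qform P x)" if "x \<in> V" for x
  proof (cases "x = 0")
    case False
    then have "Re (qform P x) > 0"
      using P by (simp add: posdef_def)
    moreover have "Re (qform Q x) / Re (qform P x) \<le> Re (qform Q v0)"
      using max normalize[OF that False] by metis
    ultimately show ?thesis
      by (simp add: field_simps)
  qed simp
  moreover have "v0 \<in> V" "Re (qform P v0) = 1"
    using \<open>v0 \<in> K\<close> by (simp_all add: K_def)
  ultimately show ?thesis
    using that by blast
qed

lemma gen_eigensystem_extend:
  fixes P Q :: "'n::finite cmat"
  assumes P: "posdef P" and Q: "hermitian Q" and sys: "gen_eigensystem P Q B l"
    and incomplete: "x \<noteq> (\<Sum>v\<in>B. cinner v (P *v x) *s v)"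
  obtains v0 l0 where "v0 \<notin> B" "gen_eigensystem P Q (insert v0 B) (l(v0 := l0))"
proof -
  have hP: "hermitian P"
    using P by (simp add: posdef_def)
  have ortho: "orthonormal_wrt P B" and eig: "\<And>v. v \<in> B \<Longrightarrow> Q *v v = of_real (l v) *s (P *v v)"
    using sys by (auto simp: gen_eigensystem_def)
  define V where "V = {u. \<forall>v\<in>B. cinner v (P *v u) = 0}"
  have "vec.subspace V"
    by (auto simp: V_def vec.subspace_def matrix_vector_right_distrib vector_scalar_commute
        cinner_add_right cinner_scale_right)
  have "closed V"
    unfolding V_def Collect_ball_eq
    by (intro closed_INT ballI closed_Collect_eq)
      (auto simp: cinner_def matrix_vector_mult_def intro!: continuous_intros)
  have "x - (\<Sum>v\<in>B. cinner v (P *v x) *s v) \<in> V"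
    using orthonormal_wrt_residual[OF ortho] by (simp add: V_def)
  moreover have "x - (\<Sum>v\<in>B. cinner v (P *v x) *s v) \<noteq> 0"
    using incomplete by simp
  ultimately obtain v0 where "v0 \<in> V" "Re (qform P v0) = 1"
    and max: "\<And>u. u \<in> V \<Longrightarrow> Re (qform Q u) \<le> Re (qform Q v0) * Re (qform P u)"
    using Rayleigh_max_on_subspace[OF P \<open>vec.subspace V\<close> \<open>closed V\<close>] by blast
  define l0 where "l0 = Re (qform Q v0)"
  define D where "D = Q - l0 *\<^sub>R P"
  have "hermitian D"
    using Q hP by (simp add: D_def hermitian_diff hermitian_scaleR)
  have Re_qform_D: "Re (qform D u) = Re (qform Q u) - l0 * Re (qform P u)" for u
    by (simp add: D_def qform_diff qform_scaleR)
  have "cinner u (D *v v0) = 0" if "u \<in> V" for u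
    using hermitian_max_on_subspace_stationary[OF \<open>hermitian D\<close> \<open>vec.subspace V\<close> \<open>v0 \<in> V\<close> _ _ that]
      max \<open>Re (qform P v0) = 1\<close> by (simp add: Re_qform_D l0_def)
  moreover have "cinner w (D *v v0) = 0" if "w \<in> B" for w
  proof -
    have "cinner w (Q *v v0) = of_real (l w) * cinner w (P *v v0)"
      using eig[OF that] by (simp add: hermitian_cinner[OF Q] hermitian_cinner[OF hP] cinner_scale_left)
    then show ?thesis
      using \<open>v0 \<in> V\<close> that
      by (simp add: V_def D_def matrix_vector_mult_diff_rdistrib scaleR_matrix_vector_assoc
          cinner_diff_right cinner_scaleR_right)
  qed
  ultimately have "D *v v0 = 0"
    by (intro orthonormal_wrt_eq_zero[OF ortho]) (auto simp: V_def)
  then have "Q *v v0 = of_real l0 *s (P *v v0)"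
    by (simp add: D_def matrix_vector_mult_diff_rdistrib scaleR_matrix_vector_assoc scaleR_cvec)
  moreover have "cinner v0 (P *v v0) = 1"
    using hermitian_qform_real[OF hP, of v0] \<open>Re (qform P v0) = 1\<close> by (simp add: qform_cinner)
  then have "v0 \<notin> B" "orthonormal_wrt P (insert v0 B)"
    using orthonormal_wrt_insert[OF ortho hP] \<open>v0 \<in> V\<close> by (auto simp: V_def)
  ultimately have "gen_eigensystem P Q (insert v0 B) (l(v0 := l0))"
    using eig by (auto simp: gen_eigensystem_def)
  then show ?thesis
    using that \<open>v0 \<notin> B\<close> by blast
qed

lemma gen_eigensystem_exists:
  fixes P Q :: "'n::finite cmat"
  assumes P: "posdef P" and Q: "hermitian Q"
  obtains B l where "gen_eigensystem P Q B l" "\<And>x. x = (\<Sum>v\<in>B. cinner v (P *v x) *s v)"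
proof -
  define S where "S = {card B | B l. gen_eigensystem P Q B l}"
  have "S \<subseteq> {..CARD('n)}"
    using orthonormal_wrt_card(2) by (auto simp: S_def gen_eigensystem_def)
  then have "finite S"
    using finite_subset by blast
  have "gen_eigensystem P Q {} (\<lambda>_. 0)"
    by (simp add: gen_eigensystem_def orthonormal_wrt_def)
  then have "S \<noteq> {}"
    unfolding S_def by blast
  then have "Max S \<in> S"
    using Max_in[OF \<open>finite S\<close>] by blast
  then obtain B l where sys: "gen_eigensystem P Q B l" and "card B = Max S"
    by (auto simp: S_def)
  have "x = (\<Sum>v\<in>B. cinner v (P *v x) *s v)" for x
  proof (rule ccontr)
    assume "x \<noteq> (\<Sum>v\<in>B. cinner v (P *v x) *s v)"
    then obtain v0 l0 where "v0 \<notin> B" "gen_eigensystem P Q (insert v0 B) (l(v0 := l0))"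
      using gen_eigensystem_extend[OF P Q sys] by blast
    then have "card (insert v0 B) \<in> S"
      unfolding S_def by blast
    then have "card (insert v0 B) \<le> card B"
      using Max_ge[OF \<open>finite S\<close>] \<open>card B = Max S\<close> by simp
    moreover have "finite B"
      using sys orthonormal_wrt_card(1) unfolding gen_eigensystem_def by blast
    ultimately show False
      using \<open>v0 \<notin> B\<close> by simp
  qed
  then show ?thesis
    using that sys by blast
qed

definition rank1 :: "complex^'n \<Rightarrow> complex^'n^'n" where
  "rank1 w = (\<chi> i j. w $ i * cnj (w $ j))"

lemma rank1_mult_vector: "rank1 w *v x = cinner w x *s w"
  by (simp add: rank1_def vec_eq_iff matrix_vector_mult_def cinner_def sum_distrib_left
      sum_distrib_right mult_ac)

lemma psd_rank1: "psd (rank1 w)"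
proof -
  have "hermitian (rank1 w)"
    by (simp add: hermitian_def rank1_def cadj_def vec_eq_iff mult.commute)
  moreover have "qform (rank1 w) x = cinner w x * cnj (cinner w x)" for x
    by (simp add: qform_cinner rank1_mult_vector cinner_scale_right cinner_commute mult.commute)
  ultimately show ?thesis
    by (simp add: psd_def complex_norm_square[symmetric])
qed

lemma sum_rank1_mult_vector:
  "(\<Sum>v\<in>B. g v *\<^sub>R rank1 (f v)) *v x = (\<Sum>v\<in>B. (of_real (g v) * cinner (f v) x) *s f v)"
  by (simp add: sum_matrix_vector_distrib scaleR_matrix_vector_assoc rank1_mult_vector scaleR_cvec
      vector_smult_assoc)

lemma gen_eigensystem_expansion:
  assumes "gen_eigensystem P Q B g" "hermitian P" and complete: "\<And>x. x = (\<Sum>v\<in>B. cinner v (P *v x) *s v)"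
  shows "Q = (\<Sum>v\<in>B. g v *\<^sub>R rank1 (P *v v))"
proof (subst matrix_eq, intro allI)
  fix x
  have "Q *v x = Q *v (\<Sum>v\<in>B. cinner v (P *v x) *s v)"
    using complete by metis
  also have "\<dots> = (\<Sum>v\<in>B. (of_real (g v) * cinner v (P *v x)) *s (P *v v))"
    using assms(1) by (simp add: gen_eigensystem_def matrix_vector_mult_sum_right vector_scalar_commute
        vector_smult_assoc mult.commute)
  also have "\<dots> = (\<Sum>v\<in>B. g v *\<^sub>R rank1 (P *v v)) *v x"
    by (simp add: sum_rank1_mult_vector hermitian_cinner[OF assms(2)])
  finally show "Q *v x = (\<Sum>v\<in>B. g v *\<^sub>R rank1 (P *v v)) *v x" .
qed

lemma sum_rank1_inverse:
  assumes "orthonormal_wrt P B" "hermitian P" and complete: "\<And>x. x = (\<Sum>v\<in>B. cinner v (P *v x) *s v)"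
    and nz: "\<And>v. v \<in> B \<Longrightarrow> g v \<noteq> 0"
  shows "(\<Sum>v\<in>B. (1 / g v) *\<^sub>R rank1 v) ** (\<Sum>v\<in>B. g v *\<^sub>R rank1 (P *v v)) = mat 1"
proof (subst matrix_eq, intro allI)
  fix x
  have fin: "finite B"
    using orthonormal_wrt_card(1)[OF assms(1)] .
  have "cinner u ((\<Sum>v\<in>B. g v *\<^sub>R rank1 (P *v v)) *v x) = of_real (g u) * cinner u (P *v x)"
    if "u \<in> B" for u
  proof -
    have "(\<Sum>v\<in>B. g v *\<^sub>R rank1 (P *v v)) *v x = P *v (\<Sum>v\<in>B. (of_real (g v) * cinner v (P *v x)) *s v)"
      by (simp add: sum_rank1_mult_vector matrix_vector_mult_sum_right vector_scalar_commute
          hermitian_cinner[OF assms(2)])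
    then show ?thesis
      using orthonormal_wrt_coeff[OF assms(1) fin subset_refl that] by simp
  qed
  then have "(\<Sum>v\<in>B. (1 / g v) *\<^sub>R rank1 v) *v ((\<Sum>v\<in>B. g v *\<^sub>R rank1 (P *v v)) *v x)
      = (\<Sum>u\<in>B. cinner u (P *v x) *s u)"
    using nz by (simp add: sum_rank1_mult_vector)
  then show "((\<Sum>v\<in>B. (1 / g v) *\<^sub>R rank1 v) ** (\<Sum>v\<in>B. g v *\<^sub>R rank1 (P *v v))) *v x = mat 1 *v x"
    using complete by (simp add: matrix_vector_mul_assoc[symmetric])
qed

lemma hmean_gen_eigensystem:
  fixes P Q :: "'n::finite cmat"
  assumes P: "posdef P" and Q: "posdef Q" and t: "0 \<le> t" "t \<le> 1"
    and sys: "gen_eigensystem P Q B l" and complete: "\<And>x. x = (\<Sum>v\<in>B. cinner v (P *v x) *s v)"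
  shows "\<And>v. v \<in> B \<Longrightarrow> l v > 0"
    and "P = (\<Sum>v\<in>B. 1 *\<^sub>R rank1 (P *v v))"
    and "Q = (\<Sum>v\<in>B. l v *\<^sub>R rank1 (P *v v))"
    and "hmean P t Q = (\<Sum>v\<in>B. (1 / ((1 - t) + t / l v)) *\<^sub>R rank1 (P *v v))"
proof -
  have hP: "hermitian P"
    using P by (simp add: posdef_def)
  have ortho: "orthonormal_wrt P B"
    using sys by (simp add: gen_eigensystem_def)
  show l_pos: "l v > 0" if "v \<in> B" for v
  proof -
    have "cinner v (P *v v) = 1"
      using ortho that by (simp add: orthonormal_wrt_def)
    then have "qform Q v = of_real (l v)" "v \<noteq> 0"
      using sys that by (auto simp: gen_eigensystem_def qform_cinner cinner_scale_right)
    then show ?thesis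
      using Q by (metis posdef_def Re_complex_of_real)
  qed
  have "gen_eigensystem P P B (\<lambda>_. 1)"
    using ortho by (simp add: gen_eigensystem_def)
  then show P_eq: "P = (\<Sum>v\<in>B. 1 *\<^sub>R rank1 (P *v v))"
    using gen_eigensystem_expansion[OF _ hP complete] by blast
  show Q_eq: "Q = (\<Sum>v\<in>B. l v *\<^sub>R rank1 (P *v v))"
    using gen_eigensystem_expansion[OF sys hP complete] .
  have "matrix_inv P = (\<Sum>v\<in>B. (1 / 1) *\<^sub>R rank1 v)"
    using sum_rank1_inverse[OF ortho hP complete, of "\<lambda>_. 1"]
    by (subst P_eq) (rule matrix_inv_unique, simp)
  moreover have "matrix_inv Q = (\<Sum>v\<in>B. (1 / l v) *\<^sub>R rank1 v)"
    using sum_rank1_inverse[OF ortho hP complete, of l] l_pos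
    by (subst Q_eq) (rule matrix_inv_unique, force)
  moreover define c where "c v = (1 - t) + t / l v" for v
  ultimately have "(1 - t) *\<^sub>R matrix_inv P + t *\<^sub>R matrix_inv Q = (\<Sum>v\<in>B. c v *\<^sub>R rank1 v)"
    by (simp add: c_def scaleR_sum_right sum.distrib[symmetric] scaleR_add_left)
  moreover have "c v > 0" if "v \<in> B" for v
    using l_pos[OF that] t by (cases "t = 1") (auto simp: c_def intro: add_pos_nonneg)
  then have "(\<Sum>v\<in>B. c v *\<^sub>R rank1 v) ** (\<Sum>v\<in>B. (1 / c v) *\<^sub>R rank1 (P *v v)) = mat 1"
    using sum_rank1_inverse[OF ortho hP complete, of "\<lambda>v. 1 / c v"] by force
  then have "(\<Sum>v\<in>B. (1 / c v) *\<^sub>R rank1 (P *v v)) ** (\<Sum>v\<in>B. c v *\<^sub>R rank1 v) = mat 1"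
    using matrix_left_right_inverse by blast
  ultimately show "hmean P t Q = (\<Sum>v\<in>B. (1 / ((1 - t) + t / l v)) *\<^sub>R rank1 (P *v v))"
    unfolding hmean_def c_def by (simp add: matrix_inv_unique)
qed

section \<open>Positive linear maps and Ando's inequality\<close>

locale strictly_positive_map =
  fixes \<Phi> :: "'n::finite cmat \<Rightarrow> 'r::finite cmat"
  assumes positive_linear: "positive_linear_map \<Phi>"
    and posdef_map_mat_1: "posdef (\<Phi> (mat 1))"
begin

lemma map_add: "\<Phi> (A + B) = \<Phi> A + \<Phi> B"
  and map_cscale: "\<Phi> (cscale c A) = cscale c (\<Phi> A)"
  and map_psd: "psd A \<Longrightarrow> psd (\<Phi> A)"
  using positive_linear by (auto simp: positive_linear_map_def)

lemma map_scaleR: "\<Phi> (r *\<^sub>R A) = r *\<^sub>R \<Phi> A"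
  using map_cscale[of "of_real r" A] by (simp add: cscale_of_real)

lemma bounded_linear_map: "bounded_linear \<Phi>"
  unfolding linear_conv_bounded_linear[symmetric]
  by (intro linearI) (simp_all add: map_add map_scaleR)

lemma map_diff: "\<Phi> (A - B) = \<Phi> A - \<Phi> B"
  and map_sum: "\<Phi> (sum F S) = (\<Sum>s\<in>S. \<Phi> (F s))"
  using bounded_linear_map bounded_linear.linear linear_diff linear_sum by blast+

lemma Re_qform_map_nonneg: "psd A \<Longrightarrow> Re (qform (\<Phi> A) x) \<ge> 0"
  using map_psd psd_def by blast

lemma Re_qform_map_mono: "psd (B - A) \<Longrightarrow> Re (qform (\<Phi> A) x) \<le> Re (qform (\<Phi> B) x)"
  using Re_qform_map_nonneg[of "B - A" x] by (simp add: map_diff qform_diff)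

text \<open>A hermitian matrix is a psd matrix plus a real multiple of the identity.\<close>

lemma map_hermitian:
  assumes "hermitian H"
  shows "hermitian (\<Phi> H)"
proof -
  obtain m where "psd (H - m *\<^sub>R mat 1)"
    using Re_qform_lower_bound psd_diff_scaleR_mat_1[OF assms] by blast
  then have "hermitian (\<Phi> (H - m *\<^sub>R mat 1))"
    using map_psd psd_def by blast
  moreover have "\<Phi> H = \<Phi> (H - m *\<^sub>R mat 1) + m *\<^sub>R \<Phi> (mat 1)"
    by (simp add: map_diff map_scaleR)
  ultimately show ?thesis
    using posdef_map_mat_1 by (simp add: hermitian_add hermitian_scaleR posdef_def)
qed

lemma map_cadj: "\<Phi> (cadj X) = cadj (\<Phi> X)"
proof -
  define H1 where "H1 = ReM X"
  define H2 where "H2 = cscale (- \<i> / 2) (X - cadj X)"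
  have h1: "hermitian H1"
    by (simp add: H1_def hermitian_ReM)
  have h2: "hermitian H2"
    by (simp add: H2_def hermitian_def cscale_def cadj_def vec_eq_iff algebra_simps)
  have X: "X = H1 + cscale \<i> H2"
    by (simp add: H1_def H2_def ReM_def cscale_def vec_eq_iff cadj_def field_simps)
  have "cadj X = H1 + cscale (- \<i>) H2"
    using h1 h2 by (simp add: X cadj_add cadj_cscale hermitian_def)
  then have "\<Phi> (cadj X) = \<Phi> H1 + cscale (- \<i>) (\<Phi> H2)"
    by (simp add: map_add map_cscale)
  also have "\<dots> = cadj (\<Phi> H1 + cscale \<i> (\<Phi> H2))"
    using map_hermitian[OF h1] map_hermitian[OF h2] by (simp add: cadj_add cadj_cscale hermitian_def)
  also have "\<dots> = cadj (\<Phi> X)"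
    by (simp add: X map_add map_cscale)
  finally show ?thesis .
qed

lemma map_ReM: "\<Phi> (ReM X) = ReM (\<Phi> X)"
  by (simp add: ReM_def map_scaleR map_add map_cadj)

lemma map_posdef:
  assumes "posdef P"
  shows "posdef (\<Phi> P)"
proof -
  obtain m where "m > 0" and "psd (P - m *\<^sub>R mat 1)"
    using posdef_lower_bound[OF assms] psd_diff_scaleR_mat_1 assms by (auto simp: posdef_def)
  have "\<Phi> P = \<Phi> (P - m *\<^sub>R mat 1) + m *\<^sub>R \<Phi> (mat 1)"
    by (simp add: map_diff map_scaleR)
  then have "Re (qform (\<Phi> P) x) > 0" if "x \<noteq> 0" for x
    using Re_qform_map_nonneg[OF \<open>psd _\<close>, of x] posdef_map_mat_1 that \<open>m > 0\<close>
    by (simp add: qform_add qform_scaleR posdef_def add_nonneg_pos)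
  moreover have "hermitian (\<Phi> P)"
    using assms map_hermitian posdef_def by blast
  ultimately show ?thesis
    by (simp add: posdef_def)
qed

lemma map_accretive: "accretive A \<Longrightarrow> accretive (\<Phi> A)"
  using map_posdef[of "ReM A"] by (simp add: accretive_def map_ReM)

end

lemma weighted_hmean_quadratic_le:
  fixes a b l qy qz r :: real
  assumes "a > 0" "b > 0" "l > 0"
    and "0 \<le> b\<^sup>2 * qy - 2 * (a * l * b) * r + (a * l)\<^sup>2 * qz"
  shows "(1 / (a + b / l)) * (qy + 2 * r + qz) \<le> qy / a + l * qz / b"
proof -
  have "a + b / l = (a * l + b) / l"
    using assms(3) by (simp add: field_simps)
  moreover have "a * l + b > 0" "b + a * l > 0"
    using assms(1-3) by (simp_all add: add_pos_pos)
  ultimately have "qy / a + l * qz / b - (1 / (a + b / l)) * (qy + 2 * r + qz) =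
      (b\<^sup>2 * qy - 2 * (a * l * b) * r + (a * l)\<^sup>2 * qz) / (a * b * (a * l + b))"
    using assms(1-3) by (simp add: field_simps power2_eq_square)
  also have "\<dots> \<ge> 0"
    using assms by simp
  finally show ?thesis
    by linarith
qed

text \<open>The defect of this inequality is a positive multiple of \<open>Re (qform F (t y - (1 - t) l z))\<close>.\<close>

lemma psd_hmean_scalar_le:
  assumes F: "psd F" and "l > 0" and t: "0 < t" "t < 1"
  shows "(1 / ((1 - t) + t / l)) * Re (qform F (y + z)) \<le> Re (qform F y) / (1 - t) + l * Re (qform F z) / t"
proof -
  have hF: "hermitian F"
    using F by (simp add: psd_def)
  define r where "r = Re (cinner z (F *v y))"
  have "Re (qform F (t *\<^sub>R y + (- ((1 - t) * l)) *\<^sub>R z)) =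
      t\<^sup>2 * Re (qform F y) - 2 * ((1 - t) * l * t) * r + ((1 - t) * l)\<^sup>2 * Re (qform F z)"
    using Re_qform_add_hermitian[OF hF, of "t *\<^sub>R y" "(- ((1 - t) * l)) *\<^sub>R z"]
    by (simp add: r_def qform_scaleR_vec matrix_vector_mult_scaleR_right cinner_scaleR_left
        cinner_scaleR_right power2_eq_square mult_ac cinner_minus_left qform_minus_vec)
  then have "0 \<le> t\<^sup>2 * Re (qform F y) - 2 * ((1 - t) * l * t) * r + ((1 - t) * l)\<^sup>2 * Re (qform F z)"
    using F unfolding psd_def by metis
  then show ?thesis
    using weighted_hmean_quadratic_le[of "1 - t" t l] Re_qform_add_hermitian[OF hF, of y z] assms(2) t
    by (simp add: r_def)
qed

context strictly_positive_map
begin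

lemma Re_qform_map_sum_rank1:
  "Re (qform (\<Phi> (\<Sum>v\<in>B. g v *\<^sub>R rank1 (w v))) x) = (\<Sum>v\<in>B. g v * Re (qform (\<Phi> (rank1 (w v))) x))"
  by (simp add: map_sum map_scaleR qform_sum qform_scaleR)

text \<open>Ando's inequality. Diagonalising \<open>P\<close> and \<open>Q\<close> simultaneously reduces it to
  \<open>psd_hmean_scalar_le\<close> for each psd matrix \<open>\<Phi> (rank1 (P v))\<close>.\<close>

lemma map_hmean_le_hmean_map:
  assumes P: "posdef P" and Q: "posdef Q" and t: "0 < t" "t < 1"
  shows "Re (qform (\<Phi> (hmean P t Q)) x) \<le> Re (qform (hmean (\<Phi> P) t (\<Phi> Q)) x)"
proof -
  obtain B l where sys: "gen_eigensystem P Q B l" and complete: "\<And>x. x = (\<Sum>v\<in>B. cinner v (P *v x) *s v)"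
    using gen_eigensystem_exists[OF P] Q by (metis posdef_def)
  have "0 \<le> t" "t \<le> 1"
    using t by simp_all
  note diag = hmean_gen_eigensystem[OF P Q this sys complete]
  define F where "F v = \<Phi> (rank1 (P *v v))" for v
  have psd_F: "psd (F v)" for v
    unfolding F_def by (rule map_psd[OF psd_rank1])
  have "Re (qform (\<Phi> (hmean P t Q)) (y + z)) \<le> Re (qform (\<Phi> P) y) / (1 - t) + Re (qform (\<Phi> Q) z) / t"
    for y z
  proof -
    have "Re (qform (\<Phi> (hmean P t Q)) (y + z))
        = (\<Sum>v\<in>B. (1 / ((1 - t) + t / l v)) * Re (qform (F v) (y + z)))"
      using t by (simp add: diag(4) Re_qform_map_sum_rank1 F_def)
    also have "\<dots> \<le> (\<Sum>v\<in>B. Re (qform (F v) y) / (1 - t) + l v * Re (qform (F v) z) / t)"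
      using psd_hmean_scalar_le[OF psd_F _ t] diag(1) by (intro sum_mono) auto
    also have "\<dots> = (\<Sum>v\<in>B. 1 * Re (qform (F v) y)) / (1 - t) + (\<Sum>v\<in>B. l v * Re (qform (F v) z)) / t"
      by (simp add: sum.distrib sum_divide_distrib)
    also have "\<dots> = Re (qform (\<Phi> P) y) / (1 - t) + Re (qform (\<Phi> Q) z) / t"
      using arg_cong[OF diag(2), of "\<lambda>M. Re (qform (\<Phi> M) y)"]
        arg_cong[OF diag(3), of "\<lambda>M. Re (qform (\<Phi> M) z)"]
      by (simp only: Re_qform_map_sum_rank1 F_def)
    finally show ?thesis .
  qed
  moreover obtain y z u where split: "x = y + z" "\<Phi> P *v y = (1 - t) *\<^sub>R u" "\<Phi> Q *v z = t *\<^sub>R u"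
      "u = hmean (\<Phi> P) t (\<Phi> Q) *v x"
    using hmean_split[of "\<Phi> P" "\<Phi> Q" t x] map_posdef posdef_imp_accretive P Q t by (metis less_eq_real_def)
  ultimately show ?thesis
    using Re_qform_split[OF split t] by simp
qed

end

section \<open>The pointwise inequality and integration\<close>

lemma loewner_le_iff_Re_qform:
  assumes "hermitian A" "hermitian B"
  shows "loewner_le A B \<longleftrightarrow> (\<forall>x. Re (qform A x) \<le> Re (qform B x))"
  using assms by (simp add: loewner_le_def psd_def hermitian_diff qform_diff)

context strictly_positive_map
begin

lemma cos_square_map_hmean_le_hmean_map:
  assumes acc: "accretive A" "accretive B"
    and S: "numrange A \<subseteq> sector \<alpha>" "numrange B \<subseteq> sector \<alpha>"
    and \<alpha>: "0 \<le> \<alpha>" "\<alpha> < pi/2" and t: "0 < t" "t < 1"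
  shows "(cos \<alpha>)\<^sup>2 * Re (qform (\<Phi> (hmean A t B)) x) \<le> Re (qform (hmean (\<Phi> A) t (\<Phi> B)) x)"
proof -
  define c where "c = (cos \<alpha>)\<^sup>2"
  have "c > 0"
    using cos_gt_zero_pi[of \<alpha>] \<alpha> by (simp add: c_def)
  define H where "H = hmean (ReM A) t (ReM B)"
  have posdef_ReM: "posdef (ReM A)" "posdef (ReM B)"
    using acc by (simp_all add: accretive_def)
  have "hermitian (c *\<^sub>R ReM (hmean A t B))" "hermitian H"
    using hermitian_hmean[OF posdef_ReM] t by (simp_all add: H_def hermitian_scaleR hermitian_ReM)
  then have "loewner_le (c *\<^sub>R ReM (hmean A t B)) H"
    using cos_square_hmean_le_hmean_ReM[OF acc S \<alpha> t]
    by (simp add: loewner_le_iff_Re_qform qform_scaleR H_def c_def)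
  then have "Re (qform (\<Phi> (c *\<^sub>R ReM (hmean A t B))) x) \<le> Re (qform (\<Phi> H) x)"
    using Re_qform_map_mono by (simp add: loewner_le_def)
  also have "\<dots> \<le> Re (qform (hmean (\<Phi> (ReM A)) t (\<Phi> (ReM B))) x)"
    using map_hmean_le_hmean_map[OF posdef_ReM t] by (simp add: H_def)
  also have "\<dots> \<le> Re (qform (hmean (\<Phi> A) t (\<Phi> B)) x)"
    using Re_qform_hmean_ReM_le[OF map_accretive[OF acc(1)] map_accretive[OF acc(2)] t]
    by (simp add: map_ReM)
  finally show ?thesis
    by (simp add: map_scaleR map_ReM qform_scaleR c_def)
qed

lemma Re_qform_map_accretive_nonneg:
  assumes "accretive M"
  shows "Re (qform (\<Phi> M) x) \<ge> 0"
  using Re_qform_map_nonneg[OF posdef_imp_psd[of "ReM M"]] assms by (simp add: accretive_def map_ReM)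

lemma map_hmean_le_sec_square_hmean_map:
  assumes acc: "accretive A" "accretive B"
    and S: "numrange A \<subseteq> sector \<alpha>" "numrange B \<subseteq> sector \<alpha>"
    and \<alpha>: "0 \<le> \<alpha>" "\<alpha> < pi/2" and t: "0 \<le> t" "t \<le> 1"
  shows "Re (qform (\<Phi> (hmean A t B)) x) \<le> (1 / (cos \<alpha>)\<^sup>2) * Re (qform (hmean (\<Phi> A) t (\<Phi> B)) x)"
proof -
  define c where "c = (cos \<alpha>)\<^sup>2"
  have "0 < c" "c \<le> 1"
    using cos_gt_zero_pi[of \<alpha>] \<alpha> abs_cos_le_one[of \<alpha>] by (simp_all add: c_def abs_square_le_1)
  have "c * Re (qform (\<Phi> (hmean A t B)) x) \<le> Re (qform (hmean (\<Phi> A) t (\<Phi> B)) x)"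
  proof (cases "t = 0 \<or> t = 1")
    case True
    then obtain M where "accretive M" "hmean A t B = M" "hmean (\<Phi> A) t (\<Phi> B) = \<Phi> M"
      using acc map_accretive hmean_0 hmean_1 by metis
    then show ?thesis
      using mult_left_le_one_le[of "Re (qform (\<Phi> M) x)" c] Re_qform_map_accretive_nonneg[of M x]
        \<open>c \<le> 1\<close> \<open>c > 0\<close> by simp
  next
    case False
    then show ?thesis
      using cos_square_map_hmean_le_hmean_map[OF acc S \<alpha>] t by (simp add: c_def)
  qed
  then show ?thesis
    using \<open>c > 0\<close> by (simp add: c_def field_simps)
qed

end

lemma norm_matrix_inv_vector_le:
  fixes X :: "'n::finite cmat"
  assumes "invertible X" "m > 0" "\<And>y. m * (norm y)\<^sup>2 \<le> Re (qform X y)"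
  shows "norm (matrix_inv X *v v) \<le> norm v / m"
proof -
  define y where "y = matrix_inv X *v v"
  have "m * (norm y)\<^sup>2 \<le> Re (qform X y)"
    using assms(3) .
  also have "\<dots> = inner y v"
    by (simp add: qform_cinner y_def matrix_mult_inv_vector_cancel[OF assms(1)] Re_cinner)
  also have "\<dots> \<le> norm y * norm v"
    by (rule norm_cauchy_schwarz)
  finally have "m * norm y \<le> norm v"
    by (cases "norm y = 0") (auto simp: power2_eq_square mult.assoc[symmetric] mult_le_cancel_right)
  then show ?thesis
    using assms(2) by (simp add: y_def field_simps)
qed

lemma matrix_vector_mult_axis_nth: "(M *v axis j 1) $ i = M $ i $ j"
  for M :: "'a::comm_ring_1^'n^'m"
  by (simp add: matrix_vector_mult_def axis_def if_distrib[of "(*) _"] cong: if_cong)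

text \<open>The denominators of \<open>A !\<^sub>t B\<close> are uniformly accretive on \<open>[0, 1]\<close>, so their inverses are
  uniformly bounded and \<open>t \<mapsto> A !\<^sub>t B\<close> is Lipschitz.\<close>

lemma continuous_on_hmean:
  fixes A B :: "'n::finite cmat"
  assumes acc: "accretive A" "accretive B"
  shows "continuous_on {0..1} (\<lambda>t. hmean A t B)"
proof -
  define X where "X t = (1 - t) *\<^sub>R matrix_inv A + t *\<^sub>R matrix_inv B" for t
  define Y where "Y t = matrix_inv (X t)" for t
  obtain mA mB where "mA > 0" "mB > 0"
    and mA: "\<And>y. mA * (norm y)\<^sup>2 \<le> Re (qform (matrix_inv A) y)"
    and mB: "\<And>y. mB * (norm y)\<^sup>2 \<le> Re (qform (matrix_inv B) y)"
    using accretive_lower_bound[OF accretive_matrix_inv] acc by metis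
  define m where "m = min mA mB"
  have "m > 0"
    using \<open>mA > 0\<close> \<open>mB > 0\<close> by (simp add: m_def)
  have invertible_X: "invertible (X t)" if "t \<in> {0..1}" for t
    using accretive_invertible[OF accretive_hmean_denominator[OF acc]] that by (simp add: X_def)
  have Y_bound: "norm (Y t *v v) \<le> norm v / m" if t: "t \<in> {0..1}" for t v
  proof (rule norm_matrix_inv_vector_le[OF invertible_X[OF t] \<open>m > 0\<close>, folded Y_def])
    fix y :: "complex^'n"
    have "m * (norm y)\<^sup>2 \<le> mA * (norm y)\<^sup>2" "m * (norm y)\<^sup>2 \<le> mB * (norm y)\<^sup>2"
      by (simp_all add: m_def mult_right_mono)
    then have "(1 - t) * (m * (norm y)\<^sup>2) + t * (m * (norm y)\<^sup>2)
        \<le> (1 - t) * Re (qform (matrix_inv A) y) + t * Re (qform (matrix_inv B) y)"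
      using t mA[of y] mB[of y] by (intro add_mono mult_left_mono) auto
    moreover have "(1 - t) * (m * (norm y)\<^sup>2) + t * (m * (norm y)\<^sup>2) = m * (norm y)\<^sup>2"
      by (simp add: algebra_simps)
    moreover have "Re (qform (X t) y) = (1 - t) * Re (qform (matrix_inv A) y) + t * Re (qform (matrix_inv B) y)"
      by (simp add: X_def qform_add qform_scaleR)
    ultimately show "m * (norm y)\<^sup>2 \<le> Re (qform (X t) y)"
      by linarith
  qed
  obtain K where "K > 0" and K: "\<And>w. norm ((matrix_inv A - matrix_inv B) *v w) \<le> norm w * K"
    using bounded_linear.pos_bounded[OF matrix_vector_mul_linear[THEN linear_conv_bounded_linear[THEN iffD1]]]
    by blast
  have lipschitz: "((K / m\<^sup>2) * norm v)-lipschitz_on {0..1} (\<lambda>t. Y t *v v)" for v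
  proof (rule lipschitz_onI)
    fix t s :: real
    assume t: "t \<in> {0..1}" and s: "s \<in> {0..1}"
    have "Y t *v v - Y s *v v = Y t *v ((X s - X t) *v (Y s *v v))"
      by (simp add: matrix_vector_mult_diff_rdistrib matrix_vector_mult_diff_distrib Y_def
          matrix_mult_inv_vector_cancel[OF invertible_X[OF s]]
          matrix_inv_mult_vector_cancel[OF invertible_X[OF t]])
    also have "\<dots> = Y t *v ((t - s) *\<^sub>R ((matrix_inv A - matrix_inv B) *v (Y s *v v)))"
      by (simp add: X_def algebra_simps scaleR_matrix_vector_assoc)
    finally have "norm (Y t *v v - Y s *v v) \<le> \<bar>t - s\<bar> * norm ((matrix_inv A - matrix_inv B) *v (Y s *v v)) / m"
      using Y_bound[OF t, of "(t - s) *\<^sub>R ((matrix_inv A - matrix_inv B) *v (Y s *v v))"] by simp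
    also have "\<dots> \<le> \<bar>t - s\<bar> * ((norm v / m) * K) / m"
      using K Y_bound[OF s] \<open>K > 0\<close> \<open>m > 0\<close>
      by (intro divide_right_mono mult_left_mono order_trans[OF K] mult_right_mono) auto
    finally show "dist (Y t *v v) (Y s *v v) \<le> (K / m\<^sup>2) * norm v * dist t s"
      by (simp add: dist_norm dist_real_def power2_eq_square field_simps)
  qed (use \<open>K > 0\<close> in simp)
  have "(\<lambda>t. hmean A t B) = (\<lambda>t. \<chi> i j. (Y t *v axis j 1) $ i)"
    by (simp add: fun_eq_iff vec_eq_iff matrix_vector_mult_axis_nth Y_def X_def hmean_def)
  then show ?thesis
    by (simp only:) (intro continuous_on_vec_lambda continuous_on_component
        lipschitz_on_continuous_on[OF lipschitz])
qed

lemma represents_space: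
  assumes "represents \<nu> f"
  shows "prob_space \<nu>" "space \<nu> = {0..1}"
    and "\<And>g. continuous_on {0..1} g \<Longrightarrow> g \<in> borel_measurable \<nu>"
proof -
  have sets: "sets \<nu> = sets (restrict_space borel {0..1::real})"
    using assms by (simp add: represents_def)
  then show "space \<nu> = {0..1}"
    using sets_eq_imp_space_eq[OF sets] by (simp add: space_restrict_space)
  show "prob_space \<nu>"
    using assms by (simp add: represents_def)
  show "g \<in> borel_measurable \<nu>" if "continuous_on {0..1} g" for g
    using borel_measurable_continuous_on_restrict[OF that] measurable_cong_sets[OF sets refl] by blast
qed

lemma integrable_hmean:
  fixes A B :: "'n::finite cmat"
  assumes "accretive A" "accretive B" "represents \<nu> f"
  shows "integrable \<nu> (\<lambda>t. hmean A t B)"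
proof -
  note \<nu> = represents_space[OF assms(3)]
  have cont: "continuous_on {0..1} (\<lambda>t. hmean A t B)"
    using continuous_on_hmean[OF assms(1,2)] .
  then obtain C where "\<forall>t\<in>{0..1}. norm (hmean A t B) \<le> C"
    using compact_imp_bounded[OF compact_continuous_image[OF cont compact_Icc]]
    unfolding bounded_iff by auto
  then have "AE t in \<nu>. norm (hmean A t B) \<le> C"
    using \<nu>(2) by (intro AE_I2) auto
  then show ?thesis
    using finite_measure.integrable_const_bound[OF prob_space.finite_measure[OF \<nu>(1)] _ \<nu>(3)[OF cont]]
    by blast
qed

lemma bounded_linear_Re_qform: "bounded_linear (\<lambda>M. Re (qform M x))"
  unfolding linear_conv_bounded_linear[symmetric]
  by (intro linearI) (simp_all add: qform_add qform_scaleR)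

lemma Re_qform_integral:
  assumes "integrable \<nu> F" "bounded_linear L"
  shows "Re (qform (L (\<integral>t. F t \<partial>\<nu>)) x) = (\<integral>t. Re (qform (L (F t)) x) \<partial>\<nu>)"
  using integral_bounded_linear[OF bounded_linear_compose[OF bounded_linear_Re_qform assms(2)] assms(1)]
  by simp

theorem mainTheorem12:
  fixes A B :: "'n::finite cmat" and \<Phi> :: "'n cmat \<Rightarrow> 'r::finite cmat"
    and \<alpha> :: real and f :: "real \<Rightarrow> real" and \<nu> :: "real measure"
  assumes "accretive A" and "accretive B"
    and "0 \<le> \<alpha>" and "\<alpha> < pi/2"
    and "numrange A \<subseteq> sector \<alpha>" and "numrange B \<subseteq> sector \<alpha>"
    and "positive_linear_map \<Phi>" and "posdef (\<Phi> (mat 1))"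
    and "\<forall>x>0. f x > 0" and "f 1 = 1"
    and "represents \<nu> f"
  shows "loewner_le (ReM (\<Phi> (opmean \<nu> A B)))
           ((1 / (cos \<alpha>)^2) *\<^sub>R ReM (opmean \<nu> (\<Phi> A) (\<Phi> B)))"
proof -
  (* Only the representing measure of f enters. *)
  interpret strictly_positive_map \<Phi>
    using assms(7,8) by (rule strictly_positive_map.intro)
  define c where "c = 1 / (cos \<alpha>)\<^sup>2"
  have int: "integrable \<nu> (\<lambda>t. hmean A t B)" "integrable \<nu> (\<lambda>t. hmean (\<Phi> A) t (\<Phi> B))"
    using integrable_hmean map_accretive assms(1,2,11) by blast+
  have "Re (qform (\<Phi> (opmean \<nu> A B)) x) \<le> c * Re (qform (opmean \<nu> (\<Phi> A) (\<Phi> B)) x)" for x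
  proof -
    have "(\<integral>t. Re (qform (\<Phi> (hmean A t B)) x) \<partial>\<nu>) \<le> (\<integral>t. c * Re (qform (hmean (\<Phi> A) t (\<Phi> B)) x) \<partial>\<nu>)"
      using map_hmean_le_sec_square_hmean_map[OF assms(1,2,5,6,3,4)] represents_space(2)[OF assms(11)]
        integrable_bounded_linear[OF bounded_linear_compose[OF bounded_linear_Re_qform bounded_linear_map] int(1)]
        integrable_bounded_linear[OF bounded_linear_Re_qform int(2)]
      by (intro integral_mono) (auto simp: c_def)
    then show ?thesis
      using Re_qform_integral[OF int(1) bounded_linear_map] Re_qform_integral[OF int(2) bounded_linear_ident]
      by (simp add: opmean_def)
  qed
  then show ?thesis
    by (simp add: loewner_le_iff_Re_qform hermitian_ReM hermitian_scaleR qform_scaleR c_def)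
qed

end
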